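(* The orbit space $\mathbb{R}P^5/\mathbb{Z}_2^4$ is homeomorphic to the join $S^2\ast\mathbb{R}P^2$.
   Context: The group $\mathbb{Z}_2^4=\{\pm1\}^4$ acts on $\mathbb{R}P^5$, with homogeneous coordinates $[x_{12}:x_{13}:x_{14}:x_{23}:x_{24}:x_{34}]$, by $x_{ij}\mapsto\epsilon_i\epsilon_jx_{ij}$, i.e. via the composition of the second symmetric power $\mathbb{Z}_2^4\to\mathbb{Z}_2^6$ with the canonical coordinatewise action of $\mathbb{Z}_2^6$ on $\mathbb{R}P^5$. *)

theory Defs
  imports "HOL-Analysis.Analysis"
begin

definition quotient_topology :: "'a topology \<Rightarrow> ('a \<Rightarrow> 'b) \<Rightarrow> 'b topology" where
  "quotient_topology X f =
     topology (\<lambda>U. U \<subseteq> f ` topspace X \<and> openin X {x \<in> topspace X. f x \<in> U})"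

lemma istopology_quotient:
  "istopology (\<lambda>U. U \<subseteq> f ` topspace X \<and> openin X {x \<in> topspace X. f x \<in> U})"
proof -
  have "openin X ({x \<in> topspace X. f x \<in> S} \<inter> {x \<in> topspace X. f x \<in> T})"
    if "openin X {x \<in> topspace X. f x \<in> S}" "openin X {x \<in> topspace X. f x \<in> T}" for S T
    using that by blast
  moreover have "{x \<in> topspace X. f x \<in> S \<inter> T} =
      {x \<in> topspace X. f x \<in> S} \<inter> {x \<in> topspace X. f x \<in> T}" for S T by blast
  moreover have "{x \<in> topspace X. f x \<in> \<Union>K} = (\<Union>U\<in>K. {x \<in> topspace X. f x \<in> U})" for K
    by blast
  ultimately show ?thesis
    unfolding istopology_def by (auto intro!: openin_Union)
qed

lemma openin_quotient_topology:
  "openin (quotient_topology X f) U \<longleftrightarrow>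
     U \<subseteq> f ` topspace X \<and> openin X {x \<in> topspace X. f x \<in> U}"
  unfolding quotient_topology_def using istopology_quotient[of f X]
  by (simp add: topology_inverse')

definition projective_space :: "('a::real_normed_vector) set topology" where
  "projective_space = quotient_topology (top_of_set (UNIV - {0})) (\<lambda>x. {c *\<^sub>R x | c. c \<noteq> 0})"

definition orbit_space :: "'a topology \<Rightarrow> ('g \<Rightarrow> 'a \<Rightarrow> 'a) \<Rightarrow> 'g set \<Rightarrow> 'a set topology" where
  "orbit_space X act G = quotient_topology X (\<lambda>p. {act g p | g. g \<in> G})"

definition join_class :: "'a topology \<Rightarrow> 'b topology \<Rightarrow> 'a \<times> 'b \<times> real \<Rightarrow> ('a \<times> 'b \<times> real) set" where
  "join_class X Y p = (case p of (x, y, t) \<Rightarrow>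
      if t = 0 then {(x, y', 0) | y'. y' \<in> topspace Y}
      else if t = 1 then {(x', y, 1) | x'. x' \<in> topspace X}
      else {(x, y, t)})"

definition join_space :: "'a topology \<Rightarrow> 'b topology \<Rightarrow> ('a \<times> 'b \<times> real) set topology" where
  "join_space X Y = quotient_topology (prod_topology X (prod_topology Y (top_of_set {0..1})))
                                      (join_class X Y)"

datatype pair6 = P12 | P13 | P14 | P23 | P24 | P34

lemma UNIV_pair6: "(UNIV :: pair6 set) = {P12, P13, P14, P23, P24, P34}"
  using pair6.exhaust by auto

instance pair6 :: finite
  by standard (simp add: UNIV_pair6)

fun pair_idx :: "pair6 \<Rightarrow> nat \<times> nat" where
  "pair_idx P12 = (1, 2)" | "pair_idx P13 = (1, 3)" | "pair_idx P14 = (1, 4)"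
| "pair_idx P23 = (2, 3)" | "pair_idx P24 = (2, 4)" | "pair_idx P34 = (3, 4)"

definition Z2_4 :: "(nat \<Rightarrow> real) set" where
  "Z2_4 = {\<epsilon>. \<forall>i \<in> {1..4}. \<epsilon> i = 1 \<or> \<epsilon> i = -1}"

definition sym2_sign :: "(nat \<Rightarrow> real) \<Rightarrow> real^pair6 \<Rightarrow> real^pair6" where
  "sym2_sign \<epsilon> x = (\<chi> k. \<epsilon> (fst (pair_idx k)) * \<epsilon> (snd (pair_idx k)) * x $ k)"

definition RP5_action :: "(nat \<Rightarrow> real) \<Rightarrow> (real^pair6) set \<Rightarrow> (real^pair6) set" where
  "RP5_action \<epsilon> L = sym2_sign \<epsilon> ` L"

end

theory Submission
  imports Defs
begin

text \<open>Group the six coordinates into the three complementary pairs \<open>{12,34}, {13,24}, {14,23}\<close>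
  and set \<open>z\<^sub>k = x\<^sub>i\<^sub>j + i x\<^sub>k\<^sub>l\<close>. The sign \<open>\<epsilon>\<close> acts on the pair \<open>(p, q)\<close> by \<open>(p, q) \<mapsto> (a p, s a q)\<close>
  with \<open>a = \<epsilon>\<^sub>i\<epsilon>\<^sub>j\<close>, where \<open>s = \<epsilon>\<^sub>1\<epsilon>\<^sub>2\<epsilon>\<^sub>3\<epsilon>\<^sub>4\<close> is common to all pairs; up to scaling, an orbit is therefore determined by
  the squares \<open>z\<^sub>k\<^sup>2 = V\<^sub>k + i U\<^sub>k\<close>, with \<open>U\<close> taken up to sign. Normalising \<open>|U|\<^sup>2 + |V|\<^sup>2 = 1\<close> and
  writing \<open>V = \<surd>(1-t) y\<close>, \<open>U = \<surd>t w\<close> with \<open>y \<in> S\<^sup>2\<close>, \<open>[w] \<in> \<real>P\<^sup>2\<close>, the orbit becomes the join point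
  \<open>(y, [w], t)\<close>, where \<open>y\<close> is forgotten at \<open>t = 1\<close> and \<open>[w]\<close> at \<open>t = 0\<close>. Concretely, both spaces are
  compact quotients mapping continuously and with the same fibres onto one subset of the Hausdorff
  space of pairs (vector, \<open>3\<times>3\<close> matrix), via \<open>x \<mapsto> (|V| V, U U\<^sup>T) / (|U|\<^sup>2 + |V|\<^sup>2)\<close> and
  \<open>(y, [w], t) \<mapsto> ((1-t) y, t w w\<^sup>T / |w|\<^sup>2)\<close>; hence both are homeomorphic to that subset.\<close>

lemma topspace_quotient_topology: "topspace (quotient_topology X f) = f ` topspace X"
proof -
  have "{x \<in> topspace X. f x \<in> f ` topspace X} = topspace X"
    by auto
  then have "openin (quotient_topology X f) (f ` topspace X)"
    by (simp add: openin_quotient_topology)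
  moreover have "openin (quotient_topology X f) U \<Longrightarrow> U \<subseteq> f ` topspace X" for U
    by (simp add: openin_quotient_topology)
  ultimately show ?thesis
    by (metis openin_subset openin_topspace subset_antisym)
qed

lemma continuous_map_quotient_topology: "continuous_map X (quotient_topology X f) f"
  unfolding continuous_map_def topspace_quotient_topology
proof (intro conjI allI impI)
  show "f \<in> topspace X \<rightarrow> f ` topspace X"
    by auto
  fix U assume "openin (quotient_topology X f) U"
  then show "openin X {x \<in> topspace X. f x \<in> U}"
    by (simp add: openin_quotient_topology)
qed

lemma compact_space_quotient_topology:
  "compact_space X \<Longrightarrow> compact_space (quotient_topology X f)"
  by (metis compact_space_def image_compactin continuous_map_quotient_topology
      topspace_quotient_topology)

lemma quotient_topology_quotient_topology:
  "quotient_topology (quotient_topology X f) g = quotient_topology X (g \<circ> f)"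
proof -
  have "{x \<in> topspace X. f x \<in> {L \<in> f ` topspace X. g L \<in> U}} = {x \<in> topspace X. (g \<circ> f) x \<in> U}"
    for U by auto
  then show ?thesis
    unfolding topology_eq
    by (simp add: openin_quotient_topology topspace_quotient_topology image_comp)
qed

lemma continuous_map_from_quotient_topology:
  assumes g: "continuous_map X Y g" and k: "\<And>x. x \<in> topspace X \<Longrightarrow> k (f x) = g x"
  shows "continuous_map (quotient_topology X f) Y k"
  unfolding continuous_map_def topspace_quotient_topology
proof (intro conjI allI impI)
  show "k \<in> f ` topspace X \<rightarrow> topspace Y"
    using g k continuous_map_image_subset_topspace by fastforce
  fix U assume "openin Y U"
  moreover have "{x \<in> topspace X. f x \<in> {y \<in> f ` topspace X. k y \<in> U}} = {x \<in> topspace X. g x \<in> U}"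
    using k by force
  ultimately show "openin (quotient_topology X f) {y \<in> f ` topspace X. k y \<in> U}"
    using g by (simp add: openin_quotient_topology openin_continuous_map_preimage)
qed

definition quotient_lift :: "'a topology \<Rightarrow> ('a \<Rightarrow> 'b) \<Rightarrow> ('a \<Rightarrow> 'c) \<Rightarrow> 'b \<Rightarrow> 'c" where
  "quotient_lift X f g y = g (SOME x. x \<in> topspace X \<and> f x = y)"

lemma quotient_lift_apply:
  assumes "\<And>x y. x \<in> topspace X \<Longrightarrow> y \<in> topspace X \<Longrightarrow> f x = f y \<Longrightarrow> g x = g y"
    and "x \<in> topspace X"
  shows "quotient_lift X f g (f x) = g x"
  unfolding quotient_lift_def
proof (rule someI2[of _ x])
  show "x \<in> topspace X \<and> f x = f x"
    using assms(2) by simp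
  fix y assume "y \<in> topspace X \<and> f y = f x"
  then show "g y = g x"
    using assms(1)[of y x] assms(2) by blast
qed

lemma continuous_map_quotient_lift:
  assumes "continuous_map X Y g"
    and "\<And>x y. x \<in> topspace X \<Longrightarrow> y \<in> topspace X \<Longrightarrow> f x = f y \<Longrightarrow> g x = g y"
  shows "continuous_map (quotient_topology X f) Y (quotient_lift X f g)"
  by (rule continuous_map_from_quotient_topology[OF assms(1)]) (rule quotient_lift_apply[OF assms(2)])

lemma homeomorphic_space_quotient_topology_image:
  fixes g :: "'a \<Rightarrow> 'c::metric_space"
  assumes compact: "compact_space (quotient_topology X f)"
    and g: "continuous_map X euclidean g"
    and fibres: "\<And>x y. x \<in> topspace X \<Longrightarrow> y \<in> topspace X \<Longrightarrow> f x = f y \<longleftrightarrow> g x = g y"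
  shows "quotient_topology X f homeomorphic_space top_of_set (g ` topspace X)"
proof -
  let ?h = "quotient_lift X f g"
  have lift: "?h (f x) = g x" if "x \<in> topspace X" for x
    using fibres that by (intro quotient_lift_apply) auto
  have "continuous_map X (top_of_set (g ` topspace X)) g"
    using g by (simp add: continuous_map_in_subtopology)
  then have cont: "continuous_map (quotient_topology X f) (top_of_set (g ` topspace X)) ?h"
    using lift by (rule continuous_map_from_quotient_topology)
  have "?h ` topspace (quotient_topology X f) = g ` topspace X"
    unfolding topspace_quotient_topology image_image by (rule image_cong) (simp_all add: lift)
  then have onto: "?h ` topspace (quotient_topology X f) = topspace (top_of_set (g ` topspace X))"
    by simp
  have inj: "inj_on ?h (topspace (quotient_topology X f))"
  proof (rule inj_onI)
    fix a b assume "a \<in> topspace (quotient_topology X f)" "b \<in> topspace (quotient_topology X f)"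
      and eq: "?h a = ?h b"
    then obtain x y where "x \<in> topspace X" "y \<in> topspace X" "a = f x" "b = f y"
      unfolding topspace_quotient_topology by blast
    with eq show "a = b"
      using fibres lift by simp
  qed
  have "Hausdorff_space (top_of_set (g ` topspace X))"
    using Hausdorff_space_euclidean by (rule Hausdorff_space_subtopology)
  then show ?thesis
    using homeomorphic_map_imp_homeomorphic_space continuous_imp_homeomorphic_map[OF cont compact _ onto inj]
    by blast
qed

definition proj_class :: "'a::real_normed_vector \<Rightarrow> 'a set" where
  "proj_class x = {c *\<^sub>R x | c. c \<noteq> 0}"

lemma projective_space_eq_quotient:
  "projective_space = quotient_topology (top_of_set (UNIV - {0})) proj_class"
  unfolding projective_space_def proj_class_def ..

lemma topspace_projective_space: "topspace projective_space = proj_class ` (UNIV - {0})"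
  by (simp add: projective_space_eq_quotient topspace_quotient_topology)

lemma mem_proj_class: "y \<in> proj_class x \<longleftrightarrow> (\<exists>c. c \<noteq> 0 \<and> y = c *\<^sub>R x)"
  by (auto simp: proj_class_def)

lemma proj_class_self: "x \<in> proj_class x"
  by (metis mem_proj_class one_neq_zero scaleR_one)

lemma proj_class_scaleR: "c \<noteq> 0 \<Longrightarrow> proj_class (c *\<^sub>R x) = proj_class x"
proof (intro set_eqI iffI)
  fix y assume "c \<noteq> 0" "y \<in> proj_class (c *\<^sub>R x)"
  then obtain d where "d * c \<noteq> 0" "y = (d * c) *\<^sub>R x"
    by (auto simp: mem_proj_class)
  then show "y \<in> proj_class x"
    unfolding mem_proj_class by blast
next
  fix y assume "c \<noteq> 0" "y \<in> proj_class x"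
  then obtain d where "d \<noteq> 0" "y = (d / c) *\<^sub>R c *\<^sub>R x"
    by (auto simp: mem_proj_class)
  with \<open>c \<noteq> 0\<close> show "y \<in> proj_class (c *\<^sub>R x)"
    unfolding mem_proj_class by (metis divide_eq_0_iff)
qed

lemma proj_class_eq_iff: "proj_class x = proj_class y \<longleftrightarrow> (\<exists>c. c \<noteq> 0 \<and> y = c *\<^sub>R x)"
proof
  assume "proj_class x = proj_class y"
  then have "y \<in> proj_class x"
    using proj_class_self[of y] by simp
  then show "\<exists>c. c \<noteq> 0 \<and> y = c *\<^sub>R x"
    by (simp add: mem_proj_class)
qed (auto simp: proj_class_scaleR)

lemma compact_space_projective_space:
  "compact_space (projective_space :: ('a::euclidean_space) set topology)"
proof -
  have "continuous_map (top_of_set (sphere (0::'a) 1)) projective_space proj_class"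
    unfolding projective_space_eq_quotient
    by (rule continuous_map_from_subtopology_mono[OF continuous_map_quotient_topology]) auto
  moreover have "compactin (top_of_set (sphere (0::'a) 1)) (sphere 0 1)"
    by (simp add: compactin_subtopology)
  ultimately have "compactin projective_space (proj_class ` sphere (0::'a) 1)"
    using image_compactin by blast
  moreover have "proj_class ` sphere (0::'a) 1 = proj_class ` (UNIV - {0})"
  proof (intro set_eqI iffI)
    fix L assume "L \<in> proj_class ` (UNIV - {0::'a})"
    then obtain x where "x \<noteq> 0" "L = proj_class x" by blast
    then have "L = proj_class ((1 / norm x) *\<^sub>R x)" "(1 / norm x) *\<^sub>R x \<in> sphere 0 1"
      by (simp_all add: proj_class_scaleR)
    then show "L \<in> proj_class ` sphere (0::'a) 1" by blast
  qed auto
  ultimately show ?thesis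
    by (simp add: compact_space_def topspace_projective_space)
qed

section \<open>The sign action and its orbits\<close>

lemma forall_pair6: "(\<forall>k. P k) \<longleftrightarrow> P P12 \<and> P P13 \<and> P P14 \<and> P P23 \<and> P P24 \<and> P P34"
  by (metis pair6.exhaust)

lemma vec_eq_pair6_iff:
  "(x::'a^pair6) = y \<longleftrightarrow> x$P12 = y$P12 \<and> x$P13 = y$P13 \<and> x$P14 = y$P14 \<and>
     x$P23 = y$P23 \<and> x$P24 = y$P24 \<and> x$P34 = y$P34"
  by (simp add: vec_eq_iff forall_pair6)

lemma Z2_4_square: "e \<in> Z2_4 \<Longrightarrow> i \<in> {1..4} \<Longrightarrow> e i * e i = 1"
  unfolding Z2_4_def by force

lemma one_in_Z2_4: "(\<lambda>_. 1) \<in> Z2_4"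
  by (simp add: Z2_4_def)

lemma mult_in_Z2_4: "g \<in> Z2_4 \<Longrightarrow> e \<in> Z2_4 \<Longrightarrow> (\<lambda>i. g i * e i) \<in> Z2_4"
  unfolding Z2_4_def by (auto dest!: bspec)

lemma sym2_sign_sym2_sign: "sym2_sign g (sym2_sign e x) = sym2_sign (\<lambda>i. g i * e i) x"
  by (simp add: vec_eq_pair6_iff sym2_sign_def)

lemma sym2_sign_scaleR: "sym2_sign e (c *\<^sub>R x) = c *\<^sub>R sym2_sign e x"
  by (simp add: vec_eq_pair6_iff sym2_sign_def)

lemma sym2_sign_one: "sym2_sign (\<lambda>_. 1) x = x"
  by (simp add: vec_eq_pair6_iff sym2_sign_def)

lemma sym2_sign_involutive:
  assumes "e \<in> Z2_4" shows "sym2_sign e (sym2_sign e x) = x"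
proof -
  have "e 1 * e 1 = 1" "e 2 * e 2 = 1" "e 3 * e 3 = 1" "e 4 * e 4 = 1"
    using Z2_4_square[OF assms] by auto
  then show ?thesis
    by (simp add: sym2_sign_sym2_sign vec_eq_pair6_iff sym2_sign_def algebra_simps)
qed

definition sign_orbit :: "(real^pair6) set \<Rightarrow> (real^pair6) set set" where
  "sign_orbit L = {RP5_action g L | g. g \<in> Z2_4}"

lemma orbit_space_RP5_eq_quotient:
  "orbit_space projective_space RP5_action Z2_4 =
     quotient_topology (top_of_set (UNIV - {0})) (sign_orbit \<circ> proj_class)"
proof -
  have "(\<lambda>L. {RP5_action g L | g. g \<in> Z2_4}) = sign_orbit"
    by (simp add: sign_orbit_def fun_eq_iff)
  then show ?thesis
    by (simp add: orbit_space_def projective_space_eq_quotient quotient_topology_quotient_topology)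
qed

lemma RP5_action_proj_class: "RP5_action e (proj_class x) = proj_class (sym2_sign e x)"
proof -
  have "proj_class x = (\<lambda>c. c *\<^sub>R x) ` (UNIV - {0})"
    by (auto simp: proj_class_def)
  moreover have "proj_class (sym2_sign e x) = (\<lambda>c. c *\<^sub>R sym2_sign e x) ` (UNIV - {0})"
    by (auto simp: proj_class_def)
  ultimately show ?thesis
    by (simp add: RP5_action_def image_image sym2_sign_scaleR)
qed

lemma self_in_sign_orbit: "L \<in> sign_orbit L"
  unfolding sign_orbit_def mem_Collect_eq
  by (intro exI[of _ "\<lambda>_. 1"]) (simp add: RP5_action_def sym2_sign_one one_in_Z2_4)

lemma sign_orbit_RP5_action:
  assumes e: "e \<in> Z2_4" shows "sign_orbit (RP5_action e L) = sign_orbit L"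
proof -
  have act: "RP5_action g (RP5_action e M) = RP5_action (\<lambda>i. g i * e i) M" for g M
    by (simp add: RP5_action_def image_image sym2_sign_sym2_sign)
  have inv: "RP5_action e (RP5_action e L) = L"
    using e by (simp add: RP5_action_def image_image sym2_sign_involutive)
  show ?thesis
  proof (intro set_eqI iffI)
    fix M assume "M \<in> sign_orbit (RP5_action e L)"
    then obtain g where "g \<in> Z2_4" "M = RP5_action (\<lambda>i. g i * e i) L"
      unfolding sign_orbit_def act by blast
    then show "M \<in> sign_orbit L"
      unfolding sign_orbit_def mem_Collect_eq using e mult_in_Z2_4 by (intro exI) auto
  next
    fix M assume "M \<in> sign_orbit L"
    then obtain g where g: "g \<in> Z2_4" "M = RP5_action g L"
      unfolding sign_orbit_def by blast
    then have "M = RP5_action (\<lambda>i. g i * e i) (RP5_action e L)"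
      using act[of g "RP5_action e L"] inv by simp
    then show "M \<in> sign_orbit (RP5_action e L)"
      unfolding sign_orbit_def mem_Collect_eq using e g(1) mult_in_Z2_4 by (intro exI) auto
  qed
qed

lemma sign_orbit_proj_class_eq_iff:
  "sign_orbit (proj_class x) = sign_orbit (proj_class x') \<longleftrightarrow>
     (\<exists>e\<in>Z2_4. \<exists>c. c \<noteq> 0 \<and> x' = c *\<^sub>R sym2_sign e x)"
proof
  assume eq: "sign_orbit (proj_class x) = sign_orbit (proj_class x')"
  have "proj_class x' \<in> sign_orbit (proj_class x)"
    unfolding eq by (rule self_in_sign_orbit)
  then obtain e where e: "e \<in> Z2_4" "proj_class (sym2_sign e x) = proj_class x'"
    unfolding sign_orbit_def RP5_action_proj_class by blast
  then obtain c where "c \<noteq> 0" "x' = c *\<^sub>R sym2_sign e x"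
    by (meson proj_class_eq_iff)
  with e(1) show "\<exists>e\<in>Z2_4. \<exists>c. c \<noteq> 0 \<and> x' = c *\<^sub>R sym2_sign e x"
    by blast
next
  assume "\<exists>e\<in>Z2_4. \<exists>c. c \<noteq> 0 \<and> x' = c *\<^sub>R sym2_sign e x"
  then obtain e c where "e \<in> Z2_4" "c \<noteq> 0" "x' = c *\<^sub>R sym2_sign e x" by blast
  then have "e \<in> Z2_4" "proj_class x' = RP5_action e (proj_class x)"
    by (simp_all add: proj_class_scaleR RP5_action_proj_class)
  then show "sign_orbit (proj_class x) = sign_orbit (proj_class x')"
    by (simp add: sign_orbit_RP5_action)
qed

section \<open>A complete invariant of the orbits\<close>

definition sq_re :: "real^pair6 \<Rightarrow> real^3" where
  "sq_re x = vector [(x$P12)^2 - (x$P34)^2, (x$P13)^2 - (x$P24)^2, (x$P14)^2 - (x$P23)^2]"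

definition sq_im :: "real^pair6 \<Rightarrow> real^3" where
  "sq_im x = vector [2 * x$P12 * x$P34, 2 * x$P13 * x$P24, 2 * x$P14 * x$P23]"

definition quartic_norm :: "real^pair6 \<Rightarrow> real" where
  "quartic_norm x = (norm (sq_im x))^2 + (norm (sq_re x))^2"

definition outer_prod :: "real^'n \<Rightarrow> real^'n^'n" where
  "outer_prod u = (\<chi> i j. u$i * u$j)"

text \<open>With \<open>V = sq_re x\<close> and \<open>U = sq_im x\<close>, the factor \<open>|V|\<close> makes both components homogeneous
  of degree 4, so that dividing by \<open>quartic_norm\<close> removes the scaling; \<open>outer_prod\<close> removes the
  common sign of \<open>U\<close>.\<close>
definition orbit_invariant :: "real^pair6 \<Rightarrow> (real^3) \<times> (real^3^3)" where
  "orbit_invariant x =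
     ((norm (sq_re x) / quartic_norm x) *\<^sub>R sq_re x, (1 / quartic_norm x) *\<^sub>R outer_prod (sq_im x))"

lemma norm_vec3_power2: "(norm (v::real^3))^2 = (v$1)^2 + (v$2)^2 + (v$3)^2"
  unfolding power2_norm_eq_inner inner_vec_def sum_3 inner_real_def by (simp add: power2_eq_square)

lemma sq_re_scaleR: "sq_re (c *\<^sub>R x) = c^2 *\<^sub>R sq_re x"
  by (simp add: sq_re_def vec_eq_iff forall_3 power2_eq_square algebra_simps)

lemma sq_im_scaleR: "sq_im (c *\<^sub>R x) = c^2 *\<^sub>R sq_im x"
  by (simp add: sq_im_def vec_eq_iff forall_3 power2_eq_square algebra_simps)

lemma quartic_norm_scaleR: "quartic_norm (c *\<^sub>R x) = c^4 * quartic_norm x"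
proof -
  have "quartic_norm (c *\<^sub>R x) = (c^2)^2 * quartic_norm x"
    by (simp add: quartic_norm_def sq_im_scaleR sq_re_scaleR power_mult_distrib algebra_simps)
  then show ?thesis
    by (simp add: power_mult[symmetric])
qed

lemma outer_prod_scaleR: "outer_prod (a *\<^sub>R u) = a^2 *\<^sub>R outer_prod u"
  by (simp add: outer_prod_def vec_eq_iff power2_eq_square algebra_simps)

lemma orbit_invariant_scaleR:
  assumes "c \<noteq> 0" shows "orbit_invariant (c *\<^sub>R x) = orbit_invariant x"
proof -
  have "c^2 > 0" "c^4 = c^2 * c^2"
    using assms by simp_all
  then show ?thesis
    by (simp add: orbit_invariant_def sq_re_scaleR sq_im_scaleR quartic_norm_scaleR
        outer_prod_scaleR field_simps)
qed

lemma sq_im_sym2_sign: "sq_im (sym2_sign e x) = (e 1 * e 2 * e 3 * e 4) *\<^sub>R sq_im x"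
  by (simp add: sq_im_def sym2_sign_def vec_eq_iff forall_3 algebra_simps)

lemma sq_re_sym2_sign:
  assumes "e \<in> Z2_4" shows "sq_re (sym2_sign e x) = sq_re x"
proof -
  have sq: "(e a * e b * y)^2 = y^2" if "a \<in> {1..4}" "b \<in> {1..4}" for a b y
  proof -
    have "(e a * e b * y)^2 = (e a * e a) * (e b * e b) * y^2"
      by algebra
    then show ?thesis
      using Z2_4_square[OF assms that(1)] Z2_4_square[OF assms that(2)] by simp
  qed
  show ?thesis
    by (simp add: sq_re_def sym2_sign_def sq)
qed

lemma orbit_invariant_sym2_sign:
  assumes e: "e \<in> Z2_4" shows "orbit_invariant (sym2_sign e x) = orbit_invariant x"
proof -
  define s where "s = e 1 * e 2 * e 3 * e 4"
  have "s^2 = (e 1 * e 1) * (e 2 * e 2) * (e 3 * e 3) * (e 4 * e 4)"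
    unfolding s_def by algebra
  then have s2: "s^2 = 1"
    using Z2_4_square[OF e] by simp
  then have "\<bar>s\<bar> = 1"
    by (metis abs_1 abs_power2 real_sqrt_abs real_sqrt_one)
  moreover have im: "sq_im (sym2_sign e x) = s *\<^sub>R sq_im x"
    unfolding s_def by (rule sq_im_sym2_sign)
  ultimately have "quartic_norm (sym2_sign e x) = quartic_norm x"
    by (simp add: quartic_norm_def sq_re_sym2_sign[OF e])
  then show ?thesis
    by (simp add: orbit_invariant_def im sq_re_sym2_sign[OF e] outer_prod_scaleR s2)
qed

lemma quartic_norm_eq:
  "quartic_norm x =
     ((x$P12)^2 + (x$P34)^2)^2 + ((x$P13)^2 + (x$P24)^2)^2 + ((x$P14)^2 + (x$P23)^2)^2"
  unfolding quartic_norm_def norm_vec3_power2 sq_im_def sq_re_def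
  by (simp add: power2_eq_square algebra_simps)

lemma quartic_norm_pos:
  assumes "x \<noteq> 0" shows "quartic_norm x > 0"
proof -
  from assms have "x$P12 \<noteq> 0 \<or> x$P13 \<noteq> 0 \<or> x$P14 \<noteq> 0 \<or> x$P23 \<noteq> 0 \<or> x$P24 \<noteq> 0 \<or> x$P34 \<noteq> 0"
    by (simp add: vec_eq_pair6_iff)
  then have "0 < ((x$P12)^2 + (x$P34)^2)^2 \<or> 0 < ((x$P13)^2 + (x$P24)^2)^2 \<or>
      0 < ((x$P14)^2 + (x$P23)^2)^2"
    by (auto simp: add_pos_nonneg add_nonneg_pos)
  then show ?thesis
    unfolding quartic_norm_eq by (smt (verit) zero_le_power2)
qed

lemma square_eq_imp_signs:
  fixes p q p' q' s :: real
  assumes s: "s = 1 \<or> s = -1" and prod: "p' * q' = s * (p * q)" and diff: "p'^2 - q'^2 = p^2 - q^2"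
  shows "\<exists>a. (a = 1 \<or> a = -1) \<and> p' = a * p \<and> q' = s * a * q"
proof -
  have ss: "s * s = 1"
    using s by auto
  have "p' * (s * q') = s * (p' * q')"
    by simp
  also have "\<dots> = p * q"
    using prod ss by (simp flip: mult.assoc)
  finally have im: "p' * (s * q') = p * q" .
  have "(s * q')^2 = (s * s) * q'^2"
    by algebra
  then have re: "p'^2 - (s * q')^2 = p^2 - q^2"
    using diff ss by simp
  have "(Complex a b)^2 = Complex (a^2 - b^2) (2 * (a * b))" for a b
    by (simp add: complex_eq_iff power2_eq_square)
  then have "(Complex p' (s * q'))^2 = (Complex p q)^2"
    by (simp only: re im)
  then have "Complex p' (s * q') = Complex p q \<or> Complex p' (s * q') = - Complex p q"
    by (simp add: power2_eq_iff)
  then consider "p' = p" "s * q' = q" | "p' = - p" "s * q' = - q"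
    by (auto simp: complex_eq_iff)
  then show ?thesis
  proof cases
    case 1
    then have "q' = s * 1 * q"
      using ss by (metis mult.assoc mult_1 mult_1_right)
    with 1 show ?thesis by auto
  next
    case 2
    then have "q' = s * (-1) * q"
      using ss by (metis mult.assoc mult_1 mult_minus1_right mult_minus_left)
    with 2 show ?thesis by auto
  qed
qed

lemma outer_prod_eq_imp:
  fixes u v :: "real^'n"
  assumes "outer_prod u = outer_prod v"
  shows "v = u \<or> v = -u"
proof -
  have uv: "u$i * u$j = v$i * v$j" for i j
    using assms unfolding outer_prod_def vec_eq_iff by simp
  show ?thesis
  proof (cases "u = 0")
    case True
    then have "v$i * v$i = 0" for i
      using uv[of i i] by simp
    with True show ?thesis
      by (simp add: vec_eq_iff)
  next
    case False
    then obtain k where k: "u$k \<noteq> 0"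
      by (auto simp: vec_eq_iff)
    have "(v$k)^2 = (u$k)^2"
      using uv[of k k] by (simp add: power2_eq_square)
    then consider "v$k = u$k" | "v$k = - u$k"
      by (auto simp: power2_eq_iff)
    then show ?thesis
    proof cases
      case 1
      have "v$j = u$j" for j
        using uv[of k j] 1 k by (metis mult_left_cancel)
      then show ?thesis
        by (simp add: vec_eq_iff)
    next
      case 2
      have "v$j = - u$j" for j
      proof -
        have "u$k * (v$j + u$j) = 0"
          using uv[of k j] 2 by (simp add: algebra_simps)
        with k show ?thesis
          by (simp add: add_eq_0_iff)
      qed
      then show ?thesis
        by (simp add: vec_eq_iff)
    qed
  qed
qed

lemma norm_scaleR_self_eq_imp:
  fixes v w :: "'a::real_normed_vector"
  assumes "norm v *\<^sub>R v = norm w *\<^sub>R w"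
  shows "v = w"
proof -
  have "(norm v)^2 = (norm w)^2"
    using arg_cong[OF assms, of norm] by (simp add: power2_eq_square)
  then have "norm v = norm w"
    by (simp add: power2_eq_iff_nonneg)
  with assms show ?thesis
    by (cases "norm v = 0") simp_all
qed

text \<open>The witness: with \<open>k = s a\<^sub>1 a\<^sub>2 a\<^sub>3\<close>, take \<open>\<epsilon> = (1, k a\<^sub>1, k a\<^sub>2, k a\<^sub>3)\<close> and scale by \<open>k\<close>.\<close>
lemma sym2_sign_of_pair_signs:
  assumes signs: "s = 1 \<or> s = -1" "a1 = 1 \<or> a1 = -1" "a2 = 1 \<or> a2 = -1" "a3 = 1 \<or> a3 = -1"
    and x': "x'$P12 = a1 * x$P12" "x'$P34 = s * a1 * x$P34"
      "x'$P13 = a2 * x$P13" "x'$P24 = s * a2 * x$P24"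
      "x'$P14 = a3 * x$P14" "x'$P23 = s * a3 * x$P23"
  shows "\<exists>e\<in>Z2_4. \<exists>c. c \<noteq> 0 \<and> x' = c *\<^sub>R sym2_sign e x"
proof -
  define k where "k = s * a1 * a2 * a3"
  define e :: "nat \<Rightarrow> real" where
    "e = (\<lambda>i. if i = 1 then 1 else if i = 2 then k * a1 else if i = 3 then k * a2 else k * a3)"
  have k: "k = 1 \<or> k = -1"
    unfolding k_def using signs by auto
  have "e \<in> Z2_4"
    unfolding Z2_4_def e_def using k signs by auto
  moreover have "x' = k *\<^sub>R sym2_sign e x"
    unfolding vec_eq_pair6_iff sym2_sign_def e_def k_def x'
    using signs by (elim disjE) simp_all
  moreover have "k \<noteq> 0"
    using k by auto
  ultimately show ?thesis
    by blast
qed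

lemma orbit_invariant_eq_imp_normalized:
  assumes N: "quartic_norm x = 1" "quartic_norm x' = 1"
    and eq: "orbit_invariant x = orbit_invariant x'"
  shows "\<exists>e\<in>Z2_4. \<exists>c. c \<noteq> 0 \<and> x' = c *\<^sub>R sym2_sign e x"
proof -
  from eq N have "norm (sq_re x) *\<^sub>R sq_re x = norm (sq_re x') *\<^sub>R sq_re x'"
    and "outer_prod (sq_im x) = outer_prod (sq_im x')"
    unfolding orbit_invariant_def by simp_all
  then have re: "sq_re x' = sq_re x" and "sq_im x' = sq_im x \<or> sq_im x' = - sq_im x"
    using norm_scaleR_self_eq_imp outer_prod_eq_imp by metis+
  then obtain s where s: "s = 1 \<or> s = -1" and im: "sq_im x' = s *\<^sub>R sq_im x"
    by (metis scaleR_minus1_left scaleR_one)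
  have prod: "x'$P12 * x'$P34 = s * (x$P12 * x$P34)" "x'$P13 * x'$P24 = s * (x$P13 * x$P24)"
      "x'$P14 * x'$P23 = s * (x$P14 * x$P23)"
    using im by (simp_all add: sq_im_def vec_eq_iff forall_3)
  have diff: "(x'$P12)^2 - (x'$P34)^2 = (x$P12)^2 - (x$P34)^2"
      "(x'$P13)^2 - (x'$P24)^2 = (x$P13)^2 - (x$P24)^2"
      "(x'$P14)^2 - (x'$P23)^2 = (x$P14)^2 - (x$P23)^2"
    using re by (simp_all add: sq_re_def vec_eq_iff forall_3)
  obtain a1 where "a1 = 1 \<or> a1 = -1" "x'$P12 = a1 * x$P12" "x'$P34 = s * a1 * x$P34"
    using square_eq_imp_signs[OF s prod(1) diff(1)] by blast
  moreover obtain a2 where "a2 = 1 \<or> a2 = -1" "x'$P13 = a2 * x$P13" "x'$P24 = s * a2 * x$P24"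
    using square_eq_imp_signs[OF s prod(2) diff(2)] by blast
  moreover obtain a3 where "a3 = 1 \<or> a3 = -1" "x'$P14 = a3 * x$P14" "x'$P23 = s * a3 * x$P23"
    using square_eq_imp_signs[OF s prod(3) diff(3)] by blast
  ultimately show ?thesis
    using s by (intro sym2_sign_of_pair_signs)
qed

lemma quartic_norm_normalize:
  assumes "x \<noteq> 0"
  defines "a \<equiv> 1 / sqrt (sqrt (quartic_norm x))"
  shows "quartic_norm (a *\<^sub>R x) = 1" "a \<noteq> 0"
proof -
  have pos: "quartic_norm x > 0"
    using quartic_norm_pos[OF assms(1)] .
  have "(sqrt (sqrt (quartic_norm x)))^4 = ((sqrt (sqrt (quartic_norm x)))^2)^2"
    by (simp flip: power_mult)
  also have "\<dots> = quartic_norm x"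
    using pos by simp
  finally have "(sqrt (sqrt (quartic_norm x)))^4 = quartic_norm x" .
  then show "quartic_norm (a *\<^sub>R x) = 1"
    using pos by (simp add: a_def quartic_norm_scaleR power_one_over)
  show "a \<noteq> 0"
    using pos by (simp add: a_def)
qed

lemma orbit_invariant_eq_iff:
  assumes "x \<noteq> 0" "x' \<noteq> 0"
  shows "orbit_invariant x = orbit_invariant x' \<longleftrightarrow>
    (\<exists>e\<in>Z2_4. \<exists>c. c \<noteq> 0 \<and> x' = c *\<^sub>R sym2_sign e x)"
proof
  obtain a a' where a: "quartic_norm (a *\<^sub>R x) = 1" "a \<noteq> 0"
    and a': "quartic_norm (a' *\<^sub>R x') = 1" "a' \<noteq> 0"
    using quartic_norm_normalize assms by metis
  assume "orbit_invariant x = orbit_invariant x'"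
  then have "orbit_invariant (a *\<^sub>R x) = orbit_invariant (a' *\<^sub>R x')"
    using a(2) a'(2) by (simp add: orbit_invariant_scaleR)
  then obtain e c where e: "e \<in> Z2_4" "c \<noteq> 0" "a' *\<^sub>R x' = c *\<^sub>R sym2_sign e (a *\<^sub>R x)"
    using orbit_invariant_eq_imp_normalized[OF a(1) a'(1)] by blast
  have "x' = (1 / a') *\<^sub>R (a' *\<^sub>R x')"
    using a'(2) by simp
  also have "\<dots> = (c * a / a') *\<^sub>R sym2_sign e x"
    using e(3) by (simp add: sym2_sign_scaleR)
  finally have "x' = (c * a / a') *\<^sub>R sym2_sign e x" .
  moreover have "c * a / a' \<noteq> 0"
    using e(2) a(2) a'(2) by simp
  ultimately show "\<exists>e\<in>Z2_4. \<exists>c. c \<noteq> 0 \<and> x' = c *\<^sub>R sym2_sign e x"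
    using e(1) by blast
next
  assume "\<exists>e\<in>Z2_4. \<exists>c. c \<noteq> 0 \<and> x' = c *\<^sub>R sym2_sign e x"
  then show "orbit_invariant x = orbit_invariant x'"
    by (auto simp: orbit_invariant_scaleR orbit_invariant_sym2_sign)
qed

lemma continuous_on_vector3:
  assumes "continuous_on S a" "continuous_on S b" "continuous_on S c"
  shows "continuous_on S (\<lambda>x. vector [a x, b x, c x] :: real^3)"
proof -
  define F where "F i = (if i = (1::3) then a else if i = 2 then b else c)" for i
  have eq: "(\<lambda>x. vector [a x, b x, c x] :: real^3) = (\<lambda>x. \<chi> i. F i x)"
    by (simp add: fun_eq_iff vec_eq_iff forall_3 F_def)
  have "continuous_on S (F i)" for i
    unfolding F_def using assms by simp
  then show ?thesis
    unfolding eq by (rule continuous_on_vec_lambda)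
qed

lemma continuous_on_outer_prod:
  "continuous_on S f \<Longrightarrow> continuous_on S (\<lambda>x. outer_prod (f x :: real^'n))"
  unfolding outer_prod_def by (intro continuous_on_vec_lambda continuous_intros)

lemma continuous_on_orbit_invariant: "continuous_on (UNIV - {0}) orbit_invariant"
proof -
  have "continuous_on S sq_re" "continuous_on S sq_im" for S
    unfolding sq_re_def sq_im_def by (intro continuous_on_vector3 continuous_intros)+
  moreover have "\<forall>x\<in>UNIV - {0}. quartic_norm x \<noteq> 0"
    using quartic_norm_pos by force
  ultimately show ?thesis
    unfolding orbit_invariant_def quartic_norm_def
    by (intro continuous_intros continuous_on_outer_prod) (auto simp: quartic_norm_def)
qed

lemma orbit_space_RP5_homeomorphic_image:
  "orbit_space (projective_space :: (real^pair6) set topology) RP5_action Z2_4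
     homeomorphic_space top_of_set (orbit_invariant ` (UNIV - {0}))"
proof -
  have "compact_space (orbit_space (projective_space :: (real^pair6) set topology) RP5_action Z2_4)"
    unfolding orbit_space_def by (intro compact_space_quotient_topology compact_space_projective_space)
  then have "quotient_topology (top_of_set (UNIV - {0})) (sign_orbit \<circ> proj_class)
      homeomorphic_space top_of_set (orbit_invariant ` topspace (top_of_set (UNIV - {0})))"
    using continuous_on_orbit_invariant
    by (intro homeomorphic_space_quotient_topology_image)
      (simp_all add: orbit_space_RP5_eq_quotient sign_orbit_proj_class_eq_iff orbit_invariant_eq_iff)
  then show ?thesis
    by (simp add: orbit_space_RP5_eq_quotient)
qed

section \<open>The join\<close>

definition proj_matrix :: "real^'n \<Rightarrow> real^'n^'n" where
  "proj_matrix w = (1 / (w \<bullet> w)) *\<^sub>R outer_prod w"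

lemma proj_matrix_scaleR: "c \<noteq> 0 \<Longrightarrow> proj_matrix (c *\<^sub>R w) = proj_matrix w"
  by (simp add: proj_matrix_def outer_prod_scaleR power2_eq_square)

lemma outer_prod_mult_vec: "outer_prod u *v v = (u \<bullet> v) *\<^sub>R u"
  by (simp add: outer_prod_def matrix_vector_mult_def inner_vec_def vec_eq_iff
      sum_distrib_left sum_distrib_right algebra_simps)

lemma proj_matrix_mult_vec: "proj_matrix w *v v = ((w \<bullet> v) / (w \<bullet> w)) *\<^sub>R w"
  by (simp add: proj_matrix_def scaleR_matrix_vector_assoc[symmetric] outer_prod_mult_vec)

lemma proj_matrix_eq_iff:
  assumes "w \<noteq> 0" "w' \<noteq> 0"
  shows "proj_matrix w = proj_matrix w' \<longleftrightarrow> proj_class w = proj_class w'"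
proof
  assume "proj_matrix w = proj_matrix w'"
  then have "w = ((w' \<bullet> w) / (w' \<bullet> w')) *\<^sub>R w'"
    using proj_matrix_mult_vec[of w w] proj_matrix_mult_vec[of w' w] assms(1) by simp
  moreover have "(w' \<bullet> w) / (w' \<bullet> w') \<noteq> 0"
    using assms(1) calculation by (metis scaleR_zero_left)
  ultimately show "proj_class w = proj_class w'"
    by (metis proj_class_scaleR)
next
  assume "proj_class w = proj_class w'"
  then show "proj_matrix w = proj_matrix w'"
    by (auto simp: proj_class_eq_iff proj_matrix_scaleR)
qed

definition line_proj_matrix :: "(real^'n) set \<Rightarrow> real^'n^'n" where
  "line_proj_matrix = quotient_lift (top_of_set (UNIV - {0})) proj_class proj_matrix"

lemma line_proj_matrix_proj_class:
  "w \<noteq> 0 \<Longrightarrow> line_proj_matrix (proj_class w) = proj_matrix w"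
  unfolding line_proj_matrix_def by (rule quotient_lift_apply) (auto simp: proj_matrix_eq_iff)

lemma continuous_map_line_proj_matrix: "continuous_map projective_space euclidean line_proj_matrix"
proof -
  have "continuous_on (UNIV - {0}) (proj_matrix :: real^'n \<Rightarrow> real^'n^'n)"
    unfolding proj_matrix_def by (intro continuous_intros continuous_on_outer_prod) auto
  then show ?thesis
    unfolding projective_space_eq_quotient line_proj_matrix_def
    by (intro continuous_map_quotient_lift) (auto simp: proj_matrix_eq_iff)
qed

definition join_map :: "(real^'n) \<times> (real^'n) set \<times> real \<Rightarrow> (real^'n) \<times> (real^'n^'n)" where
  "join_map p = (case p of (y, L, t) \<Rightarrow> ((1 - t) *\<^sub>R y, t *\<^sub>R line_proj_matrix L))"

lemma continuous_map_scaleR: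
  "continuous_map X euclideanreal a \<Longrightarrow> continuous_map X euclidean f \<Longrightarrow>
     continuous_map X euclidean (\<lambda>x. a x *\<^sub>R (f x :: 'b::real_normed_vector))"
  by (simp add: continuous_map_atin tendsto_scaleR)

lemma continuous_map_pair_euclidean:
  "continuous_map X euclidean f \<Longrightarrow> continuous_map X euclidean g \<Longrightarrow>
     continuous_map X euclidean (\<lambda>x. (f x, g x))"
  using continuous_map_pairedI[of X euclidean f euclidean g] by (simp add: euclidean_product_topology)

lemma continuous_map_join_map:
  "continuous_map (prod_topology (top_of_set S) (prod_topology projective_space (top_of_set T)))
     euclidean join_map"
proof -
  let ?B = "prod_topology (top_of_set S) (prod_topology projective_space (top_of_set T))"
  have eq: "join_map =
      (\<lambda>p. ((1 - snd (snd p)) *\<^sub>R fst p, snd (snd p) *\<^sub>R line_proj_matrix (fst (snd p))))"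
    by (auto simp: join_map_def fun_eq_iff)
  have "continuous_map ?B euclidean fst" "continuous_map ?B euclideanreal (\<lambda>p. snd (snd p))"
    "continuous_map ?B euclidean (\<lambda>p. line_proj_matrix (fst (snd p)))"
    using continuous_map_line_proj_matrix
    by (auto intro!: continuous_map_compose[unfolded o_def, OF continuous_map_snd]
        continuous_map_compose[unfolded o_def, OF continuous_map_fst]
        simp: continuous_map_from_subtopology)
  then show ?thesis
    unfolding eq
    by (intro continuous_map_pair_euclidean continuous_map_scaleR continuous_map_diff
        continuous_map_canonical_const)
qed

abbreviation join_base :: "((real^'n) \<times> (real^'n) set \<times> real) topology" where
  "join_base \<equiv> prod_topology (top_of_set (sphere 0 1)) (prod_topology projective_space (top_of_set {0..1}))"

lemma line_proj_matrix_eq_iff: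
  assumes "L \<in> topspace projective_space" "L' \<in> topspace projective_space"
  shows "line_proj_matrix L = line_proj_matrix L' \<longleftrightarrow> L = L'"
  using assms by (auto simp: topspace_projective_space line_proj_matrix_proj_class proj_matrix_eq_iff)

lemma join_class_self:
  "p \<in> topspace (prod_topology X (prod_topology Y (top_of_set {0..1}))) \<Longrightarrow> p \<in> join_class X Y p"
  by (auto simp: join_class_def)

lemma join_map_join_class: "q \<in> join_class X Y p \<Longrightarrow> join_map q = join_map p"
  by (auto simp: join_class_def join_map_def split: prod.splits if_splits)

lemma join_map_eq_imp_join_class_eq:
  assumes p: "p \<in> topspace join_base" and p': "p' \<in> topspace join_base"
    and eq: "join_map p = join_map p'"
  shows "join_class (top_of_set (sphere 0 1)) projective_space p =
         join_class (top_of_set (sphere 0 1)) projective_space p'"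
proof -
  obtain y L t y' L' t' where pp: "p = (y, L, t)" "p' = (y', L', t')"
    by (cases p, cases p') auto
  have y: "norm y = 1" "norm y' = 1" "0 \<le> t" "t \<le> 1" "0 \<le> t'" "t' \<le> 1"
    and L: "L \<in> topspace projective_space" "L' \<in> topspace projective_space"
    using p p' by (auto simp: pp)
  have e1: "(1 - t) *\<^sub>R y = (1 - t') *\<^sub>R y'" and e2: "t *\<^sub>R line_proj_matrix L = t' *\<^sub>R line_proj_matrix L'"
    using eq by (simp_all add: join_map_def pp)
  have "norm ((1 - t) *\<^sub>R y) = norm ((1 - t') *\<^sub>R y')"
    using e1 by simp
  then have tt: "t' = t"
    using y by simp
  have "t \<noteq> 1 \<Longrightarrow> y = y'" "t \<noteq> 0 \<Longrightarrow> L = L'"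
    using e1 e2 line_proj_matrix_eq_iff[OF L] by (simp_all add: tt)
  then show ?thesis
    by (auto simp: pp tt join_class_def)
qed

lemma join_class_eq_iff:
  assumes "p \<in> topspace join_base" "p' \<in> topspace join_base"
  shows "join_class (top_of_set (sphere 0 1)) projective_space p =
           join_class (top_of_set (sphere 0 1)) projective_space p' \<longleftrightarrow> join_map p = join_map p'"
  using assms join_map_eq_imp_join_class_eq join_class_self join_map_join_class by metis

lemma join_space_homeomorphic_image:
  "join_space (top_of_set (sphere (0::real^'n) 1)) (projective_space :: (real^'n) set topology)
     homeomorphic_space top_of_set (join_map ` topspace (join_base :: ((real^'n) \<times> _) topology))"
  unfolding join_space_def
proof (rule homeomorphic_space_quotient_topology_image)
  have "compact_space (join_base :: ((real^'n) \<times> (real^'n) set \<times> real) topology)"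
    by (simp add: compact_space_prod_topology compact_space_projective_space compact_space_subtopology
        compactin_subtopology)
  then show "compact_space (quotient_topology join_base
      (join_class (top_of_set (sphere (0::real^'n) 1)) projective_space))"
    by (rule compact_space_quotient_topology)
qed (simp_all only: continuous_map_join_map join_class_eq_iff)

lemma sq_re_sq_im_surj: "\<exists>x. sq_re x = V \<and> sq_im x = U"
proof -
  have "\<exists>p q. p^2 - q^2 = v \<and> 2 * p * q = u" for u v :: real
  proof -
    have "Re ((csqrt (Complex v u))^2) = v" "Im ((csqrt (Complex v u))^2) = u"
      by simp_all
    then show ?thesis
      unfolding Re_power2 Im_power2 by blast
  qed
  then have "\<forall>i. \<exists>p q. p^2 - q^2 = V$i \<and> 2 * p * q = U$i"
    by blast
  then obtain p q where "\<forall>i. (p i)^2 - (q i)^2 = V$i \<and> 2 * p i * q i = U$i"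
    by metis
  then show ?thesis
    by (intro exI[of _ "\<chi> k. case k of P12 \<Rightarrow> p 1 | P34 \<Rightarrow> q 1 | P13 \<Rightarrow> p 2 | P24 \<Rightarrow> q 2
        | P14 \<Rightarrow> p 3 | P23 \<Rightarrow> q 3"])
      (simp add: sq_re_def sq_im_def vec_eq_iff forall_3 mult.assoc)
qed

lemma orbit_invariant_eq_of_sq:
  assumes "sq_re x = V" "sq_im x = U" "(norm U)^2 + (norm V)^2 = 1"
  shows "orbit_invariant x = (norm V *\<^sub>R V, outer_prod U)"
  using assms by (simp add: orbit_invariant_def quartic_norm_def)

lemma join_map_in_orbit_invariant_image:
  assumes "p \<in> topspace (join_base :: ((real^3) \<times> _) topology)"
  shows "join_map p \<in> orbit_invariant ` (UNIV - {0})"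
proof -
  obtain y w t where p: "p = (y, proj_class w, t)" and y: "norm y = 1" and w: "w \<noteq> 0"
    and t: "0 \<le> t" "t \<le> 1"
    using assms by (fastforce simp: topspace_projective_space)
  define u where "u = (1 / norm w) *\<^sub>R w"
  have u: "norm u = 1" "u \<bullet> u = 1"
    using w by (simp_all add: u_def inner_commute flip: power2_norm_eq_inner)
  have "line_proj_matrix (proj_class w) = proj_matrix u"
    using w by (simp add: line_proj_matrix_proj_class u_def proj_matrix_scaleR)
  also have "\<dots> = outer_prod u"
    using u by (simp add: proj_matrix_def)
  finally have "line_proj_matrix (proj_class w) = outer_prod u" .
  obtain x where x: "sq_re x = sqrt (1 - t) *\<^sub>R y" "sq_im x = sqrt t *\<^sub>R u"
    using sq_re_sq_im_surj by blast
  have unit: "(norm (sqrt t *\<^sub>R u))^2 + (norm (sqrt (1 - t) *\<^sub>R y))^2 = 1"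
    using t u y by (simp add: power_mult_distrib)
  then have "orbit_invariant x = join_map p"
    using orbit_invariant_eq_of_sq[OF x] t y \<open>line_proj_matrix (proj_class w) = outer_prod u\<close>
    by (simp add: p join_map_def outer_prod_scaleR)
  moreover have "x \<noteq> 0"
  proof
    assume "x = 0"
    then have "quartic_norm x = 0"
      by (simp add: quartic_norm_eq)
    with unit x show False
      by (simp add: quartic_norm_def)
  qed
  ultimately show ?thesis
    by (metis DiffI UNIV_I image_eqI singletonD)
qed

text \<open>Where \<open>U = 0\<close> or \<open>V = 0\<close> the line \<open>w\<close>, resp. the point \<open>y\<close>, is irrelevant (the cone
  parameter is then \<open>0\<close>, resp. \<open>1\<close>), so any unit vector will do.\<close>
lemma orbit_invariant_in_join_map_image:
  assumes "x \<noteq> 0"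
  shows "orbit_invariant x \<in> join_map ` topspace (join_base :: ((real^3) \<times> _) topology)"
proof -
  define U where "U = sq_im x"
  define V where "V = sq_re x"
  define N where "N = quartic_norm x"
  have N: "N > 0" "N = (norm U)^2 + (norm V)^2"
    using quartic_norm_pos[OF assms] by (simp_all add: U_def V_def N_def quartic_norm_def)
  define t where "t = (norm U)^2 / N"
  define y where "y = (if V = 0 then axis 1 1 else (1 / norm V) *\<^sub>R V)"
  define w where "w = (if U = 0 then axis 1 1 else U)"
  have "1 - t = (N - (norm U)^2) / N"
    using N(1) by (simp add: t_def diff_divide_distrib)
  then have t: "0 \<le> t" "t \<le> 1" "1 - t = (norm V)^2 / N"
    using N by (simp_all add: t_def)
  have "(y, proj_class w, t) \<in> topspace join_base"
    using t by (auto simp: topspace_projective_space y_def w_def axis_eq_0_iff)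
  moreover have "(1 - t) *\<^sub>R y = (norm V / N) *\<^sub>R V"
    using t(3) by (simp add: y_def power2_eq_square)
  moreover have "t *\<^sub>R line_proj_matrix (proj_class w) = (1 / N) *\<^sub>R outer_prod U"
    by (simp add: w_def t_def line_proj_matrix_proj_class axis_eq_0_iff proj_matrix_def
        outer_prod_def vec_eq_iff power2_norm_eq_inner)
  ultimately show ?thesis
    unfolding orbit_invariant_def U_def[symmetric] V_def[symmetric] N_def[symmetric]
    by (metis (no_types, lifting) image_eqI join_map_def case_prod_conv)
qed

theorem mainTheorem18:
  shows "orbit_space (projective_space :: (real^pair6) set topology) RP5_action Z2_4
           homeomorphic_space
         join_space (top_of_set (sphere (0::real^3) 1)) (projective_space :: (real^3) set topology)"
proof -
  have "orbit_invariant ` (UNIV - {0}) = join_map ` topspace (join_base :: ((real^3) \<times> _) topology)"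
    using join_map_in_orbit_invariant_image orbit_invariant_in_join_map_image by blast
  then have "orbit_space (projective_space :: (real^pair6) set topology) RP5_action Z2_4
      homeomorphic_space top_of_set (join_map ` topspace (join_base :: ((real^3) \<times> _) topology))"
    using orbit_space_RP5_homeomorphic_image by simp
  then show ?thesis
    using homeomorphic_space_sym homeomorphic_space_trans join_space_homeomorphic_image by blast
qed

end
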